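(* Fix $0<p<1$ and $m\ge1$. For each word $w$ with $|w|\le m-1$ define the weighted sibling difference $h^{(p)}_w=(1-p)1_{C_{w0}}-p\,1_{C_{w2}}$, and set $\phi=1_C$, $q=p^2+(1-p)^2$, $\mu(w)=\mu_p(C_w)$. Then: (1) The family $\{\phi\}\cup\{h^{(p)}_w:|w|\le m-1\}$ is an orthogonal basis of $\mathcal F_m$, and $\|h^{(p)}_w\|^2=p(1-p)\mu(w)$. (2) $K_m$ leaves $\mathcal F_m$ invariant and vanishes on $\mathcal F_m^{\perp}$. (3) For every $w$ with $|w|\le m-1$, $\langle h^{(p)}_w,K_m\phi\rangle=p(1-p)(2p-1)\mu(w)^2\sum_{j=0}^{m-|w|-1}q^j$. (4) For every $w$ with $|w|\le m-1$, $\langle h^{(p)}_w,K_mh^{(p)}_w\rangle=2p^2(1-p)^2\mu(w)^2\sum_{j=0}^{m-|w|-1}q^j$. (5) Let $u\ne v$ be words with $|u|,|v|\le m-1$. If $u,v$ are incomparable then $\langle h^{(p)}_u,K_mh^{(p)}_v\rangle=0$. If $u$ is a proper prefix of $v$, then $\langle h^{(p)}_u,K_mh^{(p)}_v\rangle=p(1-p)^2(2p-1)\mu(v)^2\sum_{j=0}^{m-|v|-1}q^j$ if $v$ begins with $u0$, and $=-p^2(1-p)(2p-1)\mu(v)^2\sum_{j=0}^{m-|v|-1}q^j$ if $v$ begins with $u2$. Consequently, in the orthonormal basis $e_\phi=\phi$, $e_w=h^{(p)}_w/\sqrt{p(1-p)\mu(w)}$ ($|w|\le m-1$), the matrix of $K_m|_{\mathcal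 F_m}$ is self-adjoint and its difference–difference block is tree-banded: $\langle e_v,K_me_u\rangle=0$ unless $u$ and $v$ are comparable. Moreover, $p=\tfrac12$ is the unique parameter in $(0,1)$ for which this matrix is diagonal in the weighted Haar basis.
   Context: Let $S_0(x)=x/3$, $S_2(x)=(x+2)/3$ on $[0,1]$ and let $C$ be the middle-third Cantor set ($C=S_0(C)\cup S_2(C)$). For $0<p<1$, $\mu_p$ is the unique Borel probability measure on $[0,1]$ with $\mu_p=p\,\mu_p\circ S_0^{-1}+(1-p)\,\mu_p\circ S_2^{-1}$ (supported on $C$). Finite words $w=(w_1,\dots,w_n)\in\{0,2\}^n$ have length $|w|=n$; $\varnothing$ is the empty word; $wa$ is concatenation. $u$ is a prefix of $v$ if $v$ extends $u$; $u,v$ are comparable if one is a prefix of the other. $S_w=S_{w_1}\circ\cdots\circ S_{w_n}$ ($S_\varnothing=\mathrm{id}$), and $C_w=S_w(C)$; thus $\mu_p(C_{w0})=p\mu_p(C_w)$, $\mu_p(C_{w2})=(1-p)\mu_p(C_w)$. The inner product on $L^2(\mu_p)$ is $\langle f,g\rangle=\int\overline f g\,d\mu_p$. $\mathcal F_m=\mathrm{span}\{1_{C_u}:|u|\le m\}$ and $K_mf=\sum_{|u|\le m}\langle 1_{C_u},f\rangle1_{C_u}$ for $f\in L^2(\mu_p)$. *)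

theory Defs
  imports "HOL-Probability.Probability" "HOL-Library.Sublist"
begin

definition S :: "nat \<Rightarrow> real \<Rightarrow> real" where
  "S d x = (x + real d) / 3"

definition words :: "nat \<Rightarrow> nat list set" where
  "words n = {w. length w = n \<and> set w \<subseteq> {0, 2}}"

definition words_upto :: "nat \<Rightarrow> nat list set" where
  "words_upto n = {w. length w \<le> n \<and> set w \<subseteq> {0, 2}}"

fun Sw :: "nat list \<Rightarrow> real \<Rightarrow> real" where
  "Sw [] = id"
| "Sw (a # w) = S a \<circ> Sw w"

definition cantor :: "real set" where
  "cantor = (\<Inter>n. \<Union>w\<in>words n. Sw w ` {0..1})"

definition Cw :: "nat list \<Rightarrow> real set" where
  "Cw w = Sw w ` cantor"

definition ip :: "real measure \<Rightarrow> (real \<Rightarrow> complex) \<Rightarrow> (real \<Rightarrow> complex) \<Rightarrow> complex" where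
  "ip M f g = (LINT x|M. cnj (f x) * g x)"

definition L2 :: "real measure \<Rightarrow> (real \<Rightarrow> complex) set" where
  "L2 M = {f. f \<in> borel_measurable M \<and> integrable M (\<lambda>x. (cmod (f x))\<^sup>2)}"

definition Fm :: "nat \<Rightarrow> (real \<Rightarrow> complex) set" where
  "Fm m = {f. \<exists>c :: nat list \<Rightarrow> complex.
              f = (\<lambda>x. \<Sum>u\<in>words_upto m. c u * indicator (Cw u) x)}"

definition Km :: "real measure \<Rightarrow> nat \<Rightarrow> (real \<Rightarrow> complex) \<Rightarrow> (real \<Rightarrow> complex)" where
  "Km M m f = (\<lambda>x. \<Sum>u\<in>words_upto m. ip M (indicator (Cw u)) f * indicator (Cw u) x)"

definition phi :: "real \<Rightarrow> complex" where
  "phi = indicator cantor"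

definition hw :: "real \<Rightarrow> nat list \<Rightarrow> real \<Rightarrow> complex" where
  "hw p w = (\<lambda>x. complex_of_real (1 - p) * indicator (Cw (w @ [0])) x
                 - complex_of_real p * indicator (Cw (w @ [2])) x)"

definition orthogonal_basis_of ::
  "real measure \<Rightarrow> 'i set \<Rightarrow> ('i \<Rightarrow> real \<Rightarrow> complex) \<Rightarrow> (real \<Rightarrow> complex) set \<Rightarrow> bool" where
  "orthogonal_basis_of M I e V \<longleftrightarrow>
     finite I \<and>
     (\<forall>i\<in>I. e i \<in> V \<and> ip M (e i) (e i) \<noteq> 0) \<and>
     (\<forall>i\<in>I. \<forall>j\<in>I. i \<noteq> j \<longrightarrow> ip M (e i) (e j) = 0) \<and>
     (\<forall>f\<in>V. \<exists>c. f = (\<lambda>x. \<Sum>i\<in>I. c i * e i x))"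

definition haar_index :: "nat \<Rightarrow> nat list option set" where
  "haar_index m = insert None (Some ` words_upto (m - 1))"

definition haar :: "real \<Rightarrow> nat list option \<Rightarrow> real \<Rightarrow> complex" where
  "haar p i = (case i of None \<Rightarrow> phi | Some w \<Rightarrow> hw p w)"

definition ebasis :: "real measure \<Rightarrow> real \<Rightarrow> nat list option \<Rightarrow> real \<Rightarrow> complex" where
  "ebasis M p i = (case i of None \<Rightarrow> phi
     | Some w \<Rightarrow> (\<lambda>x. hw p w x / complex_of_real (sqrt (p * (1 - p) * measure M (Cw w)))))"

end

theory Submission
  imports Defs
begin

(* The cylinder masses are multiplicative, mu(C_{wa}) = p mu(C_w) or (1 - p) mu(C_w), and cylinders of
   incomparable words are disjoint. Hence <1_{C_x}, h_w> vanishes unless x extends w0 or w2, where it is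
   (1 - p) mu(C_x) resp. -p mu(C_x); for x a prefix of w the two siblings cancel. As
   K_m = sum_{|x| <= m} <1_{C_x}, .> 1_{C_x}, every entry <h_u, K_m h_v> is a sum of products of such
   coefficients over the common extensions x of u and v: it is zero for incomparable u, v, and otherwise
   a multiple of the sum of mu(C_x)^2 over the extensions x of a word z with |x| <= m, which equals
   mu(C_z)^2 sum_j q^j because the squared masses of the words of length j sum to q^j. The entry
   <h_[], K_m phi> = p(1 - p)(2p - 1) sum_j q^j vanishes only for p = 1/2, and at p = 1/2 every
   off-diagonal entry carries the factor 2p - 1. *)

section \<open>Words, the Cantor set and its cylinders\<close>

lemma inj_S: "inj (S a)"
  by (auto simp: S_def inj_def)

lemma mem_S_image_iff: "x \<in> S a ` A \<longleftrightarrow> 3 * x - real a \<in> A"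
  by (force simp: S_def image_iff algebra_simps)

lemma S_image_subset_thirds:
  assumes "A \<subseteq> {0..1}"
  shows "S 0 ` A \<subseteq> {0..1/3}" and "S 2 ` A \<subseteq> {2/3..1}"
  using assms by (auto simp: S_def)

lemma Sw_append: "Sw (u @ v) = Sw u \<circ> Sw v"
  by (induction u) auto

lemma inj_Sw: "inj (Sw w)"
proof (induction w)
  case (Cons a w)
  have "inj (S a \<circ> Sw w)"
    by (rule inj_compose[OF inj_S Cons.IH])
  then show ?case
    by (simp add: comp_def)
qed simp

lemma continuous_on_Sw: "continuous_on A (Sw w)"
proof (induction w arbitrary: A)
  case (Cons a w)
  have S_cont: "continuous_on UNIV (S a)"
    unfolding S_def by (intro continuous_intros) auto
  have "continuous_on A (S a \<circ> Sw w)"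
    by (intro continuous_on_compose Cons.IH continuous_on_subset[OF S_cont]) auto
  then show ?case
    by (simp add: comp_def)
qed simp

lemma words_0: "words 0 = {[]}"
  by (auto simp: words_def)

lemma words_Suc: "words (Suc n) = (#) 0 ` words n \<union> (#) 2 ` words n"
  by (auto simp: words_def length_Suc_conv image_iff)

lemma words_upto_0: "words_upto 0 = {[]}"
  by (auto simp: words_upto_def)

lemma words_upto_Suc: "words_upto (Suc n) = words_upto n \<union> words (Suc n)"
  by (auto simp: words_upto_def words_def)

lemma words_upto_disjoint_words_Suc: "words_upto n \<inter> words (Suc n) = {}"
  by (auto simp: words_upto_def words_def)

lemma words_upto_digits: "w \<in> words_upto n \<Longrightarrow> set w \<subseteq> {0, 2}"
  by (simp add: words_upto_def)

lemma finite_words_upto: "finite (words_upto n)"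
proof -
  have "words_upto n = {xs. set xs \<subseteq> {0, 2} \<and> length xs \<le> n}"
    by (auto simp: words_upto_def)
  then show ?thesis
    using finite_lists_length_le[of "{0, 2}" n] by simp
qed

lemma finite_words: "finite (words n)"
  by (rule finite_subset[OF _ finite_words_upto[of n]]) (auto simp: words_def words_upto_def)

lemma snoc_prefix_exclusive:
  assumes h: "prefix (w @ [a]) x" and ab: "a \<noteq> b"
  shows "\<not> prefix (w @ [b]) x" and "\<not> prefix x w" and "\<not> prefix x (w @ [b])"
proof -
  show "\<not> prefix (w @ [b]) x"
  proof
    assume "prefix (w @ [b]) x"
    then have "prefix (w @ [a]) (w @ [b]) \<or> prefix (w @ [b]) (w @ [a])"
      by (rule prefix_same_cases[OF h])
    then show False
      using ab by simp
  qed
  show "\<not> prefix x w"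
  proof
    assume "prefix x w"
    then have "length (w @ [a]) \<le> length w"
      using prefix_length_le[OF prefix_order.trans[OF h]] by blast
    then show False
      by simp
  qed
  then show "\<not> prefix x (w @ [b])"
    using h ab by auto
qed

lemma strict_prefix_imp_snoc_prefix:
  assumes "strict_prefix u v" "set v \<subseteq> {0, 2}"
  obtains a where "a \<in> {0, 2}" "prefix (u @ [a]) v"
proof -
  obtain zs where "v = u @ zs" "zs \<noteq> []"
    using assms(1) by (auto simp: strict_prefix_def prefix_def)
  then obtain a z where "v = u @ a # z"
    by (auto simp: neq_Nil_conv)
  then show ?thesis
    using that assms(2) by auto
qed

lemma sum_words_upto_extensions:
  assumes "set z \<subseteq> {0, 2}" "length z \<le> m"
  shows "(\<Sum>x\<in>words_upto m. if prefix z x then F x else 0) = (\<Sum>y\<in>words_upto (m - length z). F (z @ y))"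
proof -
  have set_eq: "{x\<in>words_upto m. prefix z x} = (\<lambda>y. z @ y) ` words_upto (m - length z)"
    using assms by (auto simp: words_upto_def prefix_def)
  have "(\<Sum>x\<in>words_upto m. if prefix z x then F x else 0) = (\<Sum>x\<in>{x\<in>words_upto m. prefix z x}. F x)"
    by (simp add: sum.inter_filter finite_words_upto)
  also have "\<dots> = (\<Sum>y\<in>words_upto (m - length z). F (z @ y))"
    unfolding set_eq by (subst sum.reindex) (auto simp: inj_on_def)
  finally show ?thesis .
qed

definition cantor_level :: "nat \<Rightarrow> real set" where
  "cantor_level n = (\<Union>w\<in>words n. Sw w ` {0..1})"

lemma cantor_level_0: "cantor_level 0 = {0..1}"
  by (simp add: cantor_level_def words_0)

lemma cantor_level_Suc: "cantor_level (Suc n) = S 0 ` cantor_level n \<union> S 2 ` cantor_level n"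
  unfolding cantor_level_def words_Suc by (auto simp: image_UN image_comp)

lemma cantor_level_subset: "cantor_level n \<subseteq> {0..1}"
  by (induction n) (auto simp: cantor_level_0 cantor_level_Suc S_def subset_iff)

lemma compact_cantor_level: "compact (cantor_level n)"
  unfolding cantor_level_def
  by (intro compact_UN finite_words compact_continuous_image continuous_on_Sw compact_Icc)

lemma cantor_eq_INT_levels: "cantor = (\<Inter>n. cantor_level n)"
  by (simp add: cantor_def cantor_level_def)

lemma cantor_subset: "cantor \<subseteq> {0..1}"
  using cantor_level_subset[of 0] by (auto simp: cantor_eq_INT_levels)

lemma compact_cantor: "compact cantor"
proof -
  have "closed cantor"
    unfolding cantor_eq_INT_levels by (intro closed_INT ballI compact_imp_closed compact_cantor_level)
  moreover have "bounded cantor"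
    by (rule bounded_subset[OF bounded_cbox]) (use cantor_subset in auto)
  ultimately show ?thesis
    by (simp add: compact_eq_bounded_closed)
qed

lemma cantor_self_similar: "cantor = S 0 ` cantor \<union> S 2 ` cantor"
proof (intro equalityI subsetI)
  fix x assume x: "x \<in> cantor"
  define a :: nat where "a = (if x \<le> 1/2 then 0 else 2)"
  have "x \<in> S a ` cantor_level n" for n
  proof -
    have "x \<in> S 0 ` cantor_level n \<union> S 2 ` cantor_level n"
      using x by (simp add: cantor_eq_INT_levels flip: cantor_level_Suc)
    moreover have "x \<notin> S 2 ` cantor_level n" if "x \<le> 1/2"
      using S_image_subset_thirds(2)[OF cantor_level_subset[of n]] that by fastforce
    moreover have "x \<notin> S 0 ` cantor_level n" if "\<not> x \<le> 1/2"
      using S_image_subset_thirds(1)[OF cantor_level_subset[of n]] that by fastforce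
    ultimately show ?thesis
      unfolding a_def by auto
  qed
  then have "3 * x - real a \<in> cantor"
    by (simp add: mem_S_image_iff cantor_eq_INT_levels)
  then show "x \<in> S 0 ` cantor \<union> S 2 ` cantor"
    by (cases "x \<le> 1/2") (auto simp: mem_S_image_iff a_def)
next
  fix x assume "x \<in> S 0 ` cantor \<union> S 2 ` cantor"
  then obtain a where a: "a \<in> {0, 2}" "x \<in> S a ` cantor" by auto
  have "x \<in> cantor_level n" for n
  proof (cases n)
    case 0
    then show ?thesis
      using a S_image_subset_thirds[OF cantor_subset] by (auto simp: cantor_level_0)
  next
    case (Suc k)
    have "x \<in> S a ` cantor_level k"
      using a(2) by (auto simp: cantor_eq_INT_levels)
    then show ?thesis
      using a(1) Suc by (auto simp: cantor_level_Suc)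
  qed
  then show "x \<in> cantor"
    by (simp add: cantor_eq_INT_levels)
qed

lemma Cw_Nil: "Cw [] = cantor"
  by (simp add: Cw_def)

lemma Cw_Cons: "Cw (a # w) = S a ` Cw w"
  by (simp add: Cw_def image_comp)

lemma Cw_append: "Cw (u @ v) = Sw u ` Cw v"
  by (simp add: Cw_def Sw_append image_comp)

lemma Cw_subset_cantor: "set w \<subseteq> {0, 2} \<Longrightarrow> Cw w \<subseteq> cantor"
proof (induction w)
  case (Cons a w)
  then have "S a ` Cw w \<subseteq> S a ` cantor"
    by auto
  also have "\<dots> \<subseteq> cantor"
    using Cons.prems cantor_self_similar by auto
  finally show ?case
    by (simp add: Cw_Cons)
qed (simp add: Cw_Nil)

lemma Cw_snoc_Un: "Cw w = Cw (w @ [0]) \<union> Cw (w @ [2])"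
proof -
  have "Cw w = Sw w ` (S 0 ` cantor \<union> S 2 ` cantor)"
    using cantor_self_similar by (simp add: Cw_def)
  then show ?thesis
    by (simp add: Cw_append Cw_Cons Cw_Nil image_Un)
qed

lemma Cw_snoc_disjoint: "Cw (w @ [0]) \<inter> Cw (w @ [2]) = {}"
proof -
  have "S 0 ` cantor \<inter> S 2 ` cantor = {}"
    using S_image_subset_thirds[OF cantor_subset] by fastforce
  then show ?thesis
    by (simp add: Cw_append Cw_Cons Cw_Nil flip: image_Int[OF inj_Sw])
qed

lemma Cw_antimono:
  assumes "prefix u v" and "set v \<subseteq> {0, 2}"
  shows "Cw v \<subseteq> Cw u"
proof -
  obtain z where z: "v = u @ z"
    using assms(1) by (auto simp: prefix_def)
  have "Cw v = Sw u ` Cw z"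
    by (simp add: z Cw_append)
  also have "\<dots> \<subseteq> Sw u ` cantor"
    using Cw_subset_cantor[of z] assms(2) z by auto
  finally show ?thesis
    by (simp add: Cw_def)
qed

lemma Cw_disjoint_if_parallel:
  assumes digits: "set u \<subseteq> {0, 2}" "set v \<subseteq> {0, 2}" and "u \<parallel> v"
  shows "Cw u \<inter> Cw v = {}"
proof -
  obtain w a b u' v' where ab: "a \<noteq> b" and u: "u = w @ a # u'" and v: "v = w @ b # v'"
    using parallel_decomp[OF \<open>u \<parallel> v\<close>] by blast
  have "Cw u \<subseteq> Cw (w @ [a])" "Cw v \<subseteq> Cw (w @ [b])"
    using digits Cw_antimono[of "w @ [a]" u] Cw_antimono[of "w @ [b]" v] by (simp_all add: u v)
  moreover have "a = 0 \<and> b = 2 \<or> a = 2 \<and> b = 0"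
    using ab digits by (auto simp: u v)
  then have "Cw (w @ [a]) \<inter> Cw (w @ [b]) = {}"
    using Cw_snoc_disjoint[of w] by blast
  ultimately show ?thesis
    by blast
qed

lemma compact_Cw: "compact (Cw w)"
  unfolding Cw_def by (intro compact_continuous_image continuous_on_Sw compact_cantor)

lemma Cw_sets_borel: "Cw w \<in> sets borel"
  by (simp add: compact_Cw compact_imp_closed borel_closed)

lemma cantor_level_sets_borel: "cantor_level n \<in> sets borel"
  by (simp add: compact_cantor_level compact_imp_closed borel_closed)

lemma S_vimage_sets_borel:
  assumes "A \<in> sets borel"
  shows "S a -` A \<in> sets borel"
proof -
  have "S a \<in> borel_measurable borel"
    unfolding S_def by measurable
  then show ?thesis
    using measurable_sets[of "S a" borel borel A] assms by simp
qed

lemma indicator_Cw_snoc_split: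
  "(indicator (Cw w) x :: complex) = indicator (Cw (w @ [0])) x + indicator (Cw (w @ [2])) x"
  using Cw_snoc_Un[of w] Cw_snoc_disjoint[of w] by (auto split: split_indicator)

section \<open>The self-similar measure\<close>

locale cantor_measure = prob_space M
  for p :: real and M :: "real measure" +
  assumes p_pos: "0 < p" and p_less_1: "p < 1"
    and sets_M: "sets M = sets borel"
    and emeasure_unit_interval: "emeasure M {0..1} = 1"
    and self_similar: "\<forall>A\<in>sets borel.
      emeasure M A = ennreal p * emeasure M (S 0 -` A) + ennreal (1 - p) * emeasure M (S 2 -` A)"
begin

lemma space_M: "space M = UNIV"
  using sets_eq_imp_space_eq[OF sets_M] by simp

lemma measure_self_similar:
  assumes A: "A \<in> sets borel"
  shows "measure M A = p * measure M (S 0 -` A) + (1 - p) * measure M (S 2 -` A)"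
proof -
  have "ennreal (measure M A) = ennreal p * ennreal (measure M (S 0 -` A))
          + ennreal (1 - p) * ennreal (measure M (S 2 -` A))"
    using self_similar A by (simp add: emeasure_eq_measure)
  also have "\<dots> = ennreal (p * measure M (S 0 -` A) + (1 - p) * measure M (S 2 -` A))"
    using p_pos p_less_1 by (subst ennreal_plus) (auto simp: ennreal_mult)
  finally show ?thesis
    using p_pos p_less_1 by (subst (asm) ennreal_inj) auto
qed

lemma measure_outside_unit_interval:
  assumes "B \<inter> {0..1} = {}"
  shows "measure M B = 0"
proof -
  have I: "{0..1::real} \<in> sets M"
    unfolding sets_M by measurable
  have "measure M B \<le> measure M (space M - {0..1})"
    using assms by (intro finite_measure_mono sets.compl_sets I) (auto simp: space_M)
  also have "\<dots> = 0"
    using prob_compl[OF I] emeasure_unit_interval by (simp add: emeasure_eq_measure)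
  finally show ?thesis
    by (simp add: measure_le_0_iff)
qed

definition digit_weight :: "nat \<Rightarrow> real" where
  "digit_weight a = (if a = 0 then p else 1 - p)"

lemma digit_weight_pos: "digit_weight a > 0"
  using p_pos p_less_1 by (simp add: digit_weight_def)

lemma measure_Cw_Cons:
  assumes a: "a \<in> {0, 2}" and w: "set w \<subseteq> {0, 2}"
  shows "measure M (Cw (a # w)) = digit_weight a * measure M (Cw w)"
proof -
  have vimage_same: "S a -` Cw (a # w) = Cw w"
    by (simp add: Cw_Cons inj_vimage_image_eq inj_S)
  have vimage_other: "measure M (S b -` Cw (a # w)) = 0" if "b \<in> {0, 2}" "b \<noteq> a" for b
  proof (rule measure_outside_unit_interval)
    show "S b -` Cw (a # w) \<inter> {0..1} = {}"
      using Cw_subset_cantor[OF w] cantor_subset a that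
      by (fastforce simp: Cw_Cons mem_S_image_iff S_def)
  qed
  from a show ?thesis
    using measure_self_similar[OF Cw_sets_borel[of "a # w"]] vimage_same vimage_other[of 0] vimage_other[of 2]
    by (auto simp: digit_weight_def)
qed

lemma measure_cantor_level: "measure M (cantor_level n) = 1"
proof (induction n)
  case 0
  show ?case
    using emeasure_unit_interval by (simp add: cantor_level_0 emeasure_eq_measure)
next
  case (Suc n)
  have "measure M (S b -` cantor_level (Suc n)) = 1" if "b \<in> {0, 2}" for b
  proof (rule antisym)
    have "cantor_level n \<subseteq> S b -` cantor_level (Suc n)"
      using that by (auto simp: cantor_level_Suc)
    then have "measure M (cantor_level n) \<le> measure M (S b -` cantor_level (Suc n))"
      by (rule finite_measure_mono) (simp add: sets_M S_vimage_sets_borel cantor_level_sets_borel)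
    then show "1 \<le> measure M (S b -` cantor_level (Suc n))"
      using Suc.IH by simp
  qed (rule prob_le_1)
  then show ?case
    using measure_self_similar[OF cantor_level_sets_borel] by simp
qed

lemma measure_cantor: "measure M cantor = 1"
proof -
  have "AE x in M. x \<in> cantor_level n" for n
    using AE_in_set_eq_1[of "cantor_level n"] measure_cantor_level cantor_level_sets_borel
    by (simp add: sets_M)
  then have "AE x in M. x \<in> cantor"
    by (simp add: AE_all_countable cantor_eq_INT_levels)
  then show ?thesis
    using AE_in_set_eq_1[of cantor] Cw_sets_borel[of "[]"] by (simp add: sets_M Cw_Nil)
qed

abbreviation mu :: "nat list \<Rightarrow> real" where
  "mu w \<equiv> measure M (Cw w)"

lemma mu_Nil: "mu [] = 1"
  using measure_cantor by (simp add: Cw_Nil)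

lemma mu_append: "set u \<subseteq> {0, 2} \<Longrightarrow> set v \<subseteq> {0, 2} \<Longrightarrow> mu (u @ v) = mu u * mu v"
  by (induction u) (auto simp: mu_Nil measure_Cw_Cons)

lemma mu_snoc_0: "set w \<subseteq> {0, 2} \<Longrightarrow> mu (w @ [0]) = p * mu w"
  using mu_append[of w "[0]"] measure_Cw_Cons[of 0 "[]"] by (simp add: mu_Nil digit_weight_def)

lemma mu_snoc_2: "set w \<subseteq> {0, 2} \<Longrightarrow> mu (w @ [2]) = (1 - p) * mu w"
  using mu_append[of w "[2]"] measure_Cw_Cons[of 2 "[]"] by (simp add: mu_Nil digit_weight_def)

lemma mu_pos: "set w \<subseteq> {0, 2} \<Longrightarrow> mu w > 0"
  by (induction w) (auto simp: mu_Nil measure_Cw_Cons digit_weight_pos)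

lemma measure_Cw_Int:
  assumes u: "set u \<subseteq> {0, 2}" and x: "set x \<subseteq> {0, 2}"
  shows "measure M (Cw u \<inter> Cw x) = (if prefix x u then mu u else if prefix u x then mu x else 0)"
proof -
  consider "prefix x u" | "strict_prefix u x" | "u \<parallel> x"
    using prefix_cases by blast
  then show ?thesis
  proof cases
    case 1
    then show ?thesis
      using Cw_antimono[OF _ u] by (simp add: Int_absorb2)
  next
    case 2
    then show ?thesis
      using Cw_antimono[OF _ x] by (auto simp: Int_absorb1 strict_prefix_def)
  next
    case 3
    then show ?thesis
      using Cw_disjoint_if_parallel[OF u x] by auto
  qed
qed

end

section \<open>Finite spans and inner products of bounded functions\<close>

definition fin_span :: "'i set \<Rightarrow> ('i \<Rightarrow> real \<Rightarrow> complex) \<Rightarrow> (real \<Rightarrow> complex) set" where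
  "fin_span I e = {f. \<exists>c. f = (\<lambda>x. \<Sum>i\<in>I. c i * e i x)}"

lemma fin_span_lincomb:
  assumes "f \<in> fin_span I e" "g \<in> fin_span I e"
  shows "(\<lambda>x. a * f x + b * g x) \<in> fin_span I e"
proof -
  obtain c d where f: "f = (\<lambda>x. \<Sum>i\<in>I. c i * e i x)" and g: "g = (\<lambda>x. \<Sum>i\<in>I. d i * e i x)"
    using assms by (auto simp: fin_span_def)
  have "(\<lambda>x. a * f x + b * g x) = (\<lambda>x. \<Sum>i\<in>I. (a * c i + b * d i) * e i x)"
    by (simp add: f g fun_eq_iff sum_distrib_left sum.distrib algebra_simps)
  then show ?thesis
    unfolding fin_span_def by (auto intro!: exI[of _ "\<lambda>i. a * c i + b * d i"])
qed

lemma fin_span_sum: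
  assumes "finite J" "\<forall>j\<in>J. g j \<in> fin_span I e"
  shows "(\<lambda>x. \<Sum>j\<in>J. d j * g j x) \<in> fin_span I e"
  using assms
proof (induction J rule: finite_induct)
  case empty
  show ?case
    unfolding fin_span_def by (auto intro!: exI[of _ "\<lambda>i. 0"])
next
  case (insert j J)
  then have "(\<lambda>x. d j * g j x + 1 * (\<Sum>j\<in>J. d j * g j x)) \<in> fin_span I e"
    by (intro fin_span_lincomb) auto
  then show ?case
    using insert by simp
qed

lemma fin_span_mem:
  assumes "finite I" "i \<in> I"
  shows "e i \<in> fin_span I e"
proof -
  have "(\<Sum>j\<in>I. (if j = i then 1 else 0) * e j x) = e i x" for x
    using assms by (simp add: if_distrib[of "\<lambda>c. c * e _ x"] cong: if_cong)
  then show ?thesis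
    unfolding fin_span_def by (auto intro!: exI[of _ "\<lambda>j. if j = i then 1 else 0"])
qed

lemma fin_span_subset:
  assumes "finite I" "\<forall>i\<in>I. e i \<in> fin_span J e'"
  shows "fin_span I e \<subseteq> fin_span J e'"
  using fin_span_sum[OF assms] by (auto simp: fin_span_def)

lemma Fm_eq_fin_span: "Fm m = fin_span (words_upto m) (\<lambda>u. indicator (Cw u))"
  by (simp add: Fm_def fin_span_def)

lemma indicator_Cw_in_Fm: "u \<in> words_upto m \<Longrightarrow> indicator (Cw u) \<in> Fm m"
  unfolding Fm_eq_fin_span by (rule fin_span_mem[OF finite_words_upto, of _ _ "\<lambda>u. indicator (Cw u)"])

lemma Km_in_Fm: "Km N m f \<in> Fm m"
  by (auto simp: Fm_def Km_def)

lemma Km_eq_0_if_orthogonal_Fm: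
  assumes "\<forall>g\<in>Fm m. ip N g f = 0"
  shows "Km N m f = (\<lambda>x. 0)"
  using assms indicator_Cw_in_Fm by (simp add: Km_def)

lemma finite_haar_index: "finite (haar_index m)"
  by (simp add: haar_index_def finite_words_upto)

lemma haar_index_digits: "Some w \<in> haar_index m \<Longrightarrow> set w \<subseteq> {0, 2}"
  by (auto simp: haar_index_def words_upto_def)

definition bounded_measurable :: "'a measure \<Rightarrow> ('a \<Rightarrow> complex) \<Rightarrow> bool" where
  "bounded_measurable N f \<longleftrightarrow> f \<in> borel_measurable N \<and> (\<exists>B. \<forall>x. cmod (f x) \<le> B)"

lemma bounded_measurable_indicator: "A \<in> sets N \<Longrightarrow> bounded_measurable N (indicator A)"
  unfolding bounded_measurable_def by (auto intro!: exI[of _ 1] split: split_indicator)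

lemma bounded_measurable_lincomb:
  assumes f: "bounded_measurable N f" and g: "bounded_measurable N g"
  shows "bounded_measurable N (\<lambda>x. a * f x + b * g x)"
proof -
  obtain B1 B2 where B1: "\<forall>x. cmod (f x) \<le> B1" and B2: "\<forall>x. cmod (g x) \<le> B2"
    and [measurable]: "f \<in> borel_measurable N" "g \<in> borel_measurable N"
    using f g by (auto simp: bounded_measurable_def)
  have "cmod (a * f x + b * g x) \<le> cmod a * B1 + cmod b * B2" for x
  proof -
    have "cmod (a * f x + b * g x) \<le> cmod a * cmod (f x) + cmod b * cmod (g x)"
      using norm_triangle_ineq[of "a * f x" "b * g x"] by (simp add: norm_mult)
    also have "\<dots> \<le> cmod a * B1 + cmod b * B2"
      using B1 B2 by (intro add_mono mult_left_mono) auto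
    finally show ?thesis .
  qed
  moreover have "(\<lambda>x. a * f x + b * g x) \<in> borel_measurable N"
    by measurable
  ultimately show ?thesis
    unfolding bounded_measurable_def by blast
qed

lemma bounded_measurable_divide: "bounded_measurable N f \<Longrightarrow> bounded_measurable N (\<lambda>x. f x / c)"
  using bounded_measurable_lincomb[of N f f "1 / c" 0] by simp

lemma cnj_ip: "cnj (ip N f g) = ip N g f"
proof -
  have "ip N g f = integral\<^sup>L N (\<lambda>x. cnj (cnj (f x) * g x))"
    unfolding ip_def by (rule Bochner_Integration.integral_cong) (auto simp: mult.commute)
  then show ?thesis
    unfolding ip_def by (simp only: Bochner_Integration.integral_cnj)
qed

lemma ip_divide_right: "ip N f (\<lambda>x. g x / c) = ip N f g / c"
  by (simp add: ip_def)

lemma ip_divide_left: "ip N (\<lambda>x. f x / c) g = ip N f g / cnj c"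
  by (simp add: ip_def)

lemma Km_divide: "Km N m (\<lambda>x. g x / c) = (\<lambda>x. Km N m g x / c)"
  by (simp add: Km_def ip_divide_right sum_divide_distrib)

lemma integrable_cnj_mult:
  assumes "finite_measure N" and f: "bounded_measurable N f" and g: "bounded_measurable N g"
  shows "integrable N (\<lambda>x. cnj (f x) * g x)"
proof -
  obtain B1 B2 where B1: "\<forall>x. cmod (f x) \<le> B1" and B2: "\<forall>x. cmod (g x) \<le> B2"
    and f_meas: "f \<in> borel_measurable N" and [measurable]: "g \<in> borel_measurable N"
    using f g by (auto simp: bounded_measurable_def)
  have [measurable]: "(\<lambda>x. cnj (f x)) \<in> borel_measurable N"
    by (rule borel_measurable_continuous_on[OF _ f_meas]) (intro continuous_intros)
  have "cmod (f x) * cmod (g x) \<le> B1 * B2" for x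
    using B1 B2 by (intro mult_mono) (auto intro: order_trans[OF norm_ge_zero])
  then have "AE x in N. norm (cnj (f x) * g x) \<le> B1 * B2"
    by (simp add: norm_mult)
  then show ?thesis
    by (intro finite_measure.integrable_const_bound[OF \<open>finite_measure N\<close>]) measurable
qed

lemma ip_lincomb_right:
  assumes "finite_measure N"
    and "bounded_measurable N f" "bounded_measurable N g1" "bounded_measurable N g2"
  shows "ip N f (\<lambda>x. a * g1 x + b * g2 x) = a * ip N f g1 + b * ip N f g2"
proof -
  have "(\<lambda>x. cnj (f x) * (a * g1 x + b * g2 x)) = (\<lambda>x. a * (cnj (f x) * g1 x) + b * (cnj (f x) * g2 x))"
    by (simp add: fun_eq_iff algebra_simps)
  then show ?thesis
    using assms by (simp add: ip_def integrable_cnj_mult)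
qed

lemma ip_sum_right:
  assumes "finite_measure N" and "bounded_measurable N f"
    and "finite I" and "\<forall>i\<in>I. bounded_measurable N (g i)"
  shows "ip N f (\<lambda>x. \<Sum>i\<in>I. c i * g i x) = (\<Sum>i\<in>I. c i * ip N f (g i))"
proof -
  have "ip N f (\<lambda>x. \<Sum>i\<in>I. c i * g i x) = integral\<^sup>L N (\<lambda>x. \<Sum>i\<in>I. c i * (cnj (f x) * g i x))"
    unfolding ip_def by (simp add: sum_distrib_left algebra_simps)
  also have "\<dots> = (\<Sum>i\<in>I. c i * ip N f (g i))"
    unfolding ip_def using assms by (simp add: integrable_cnj_mult)
  finally show ?thesis .
qed

lemma ip_indicator_indicator:
  assumes "finite_measure N" and "A \<in> sets N" "B \<in> sets N"
  shows "ip N (indicator A) (indicator B) = complex_of_real (measure N (A \<inter> B))"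
proof -
  have "(\<lambda>x. cnj (indicator A x) * indicator B x) = (\<lambda>x. complex_of_real (indicator (A \<inter> B) x))"
    by (simp add: fun_eq_iff split: split_indicator)
  then show ?thesis
    using assms by (simp add: ip_def finite_measure.emeasure_finite)
qed

section \<open>The matrix of K_m on the Haar functions\<close>

context cantor_measure
begin

lemma bounded_measurable_indicator_Cw: "bounded_measurable M (indicator (Cw w))"
  by (simp add: bounded_measurable_indicator sets_M Cw_sets_borel)

lemma phi_eq_indicator_Cw_Nil: "phi = indicator (Cw [])"
  by (simp add: phi_def Cw_Nil)

lemma hw_eq_lincomb: "hw p w = (\<lambda>x. complex_of_real (1 - p) * indicator (Cw (w @ [0])) x
   + (- complex_of_real p) * indicator (Cw (w @ [2])) x)"
  by (simp add: hw_def fun_eq_iff)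

lemma bounded_measurable_hw: "bounded_measurable M (hw p w)"
  unfolding hw_eq_lincomb by (intro bounded_measurable_lincomb bounded_measurable_indicator_Cw)

lemma bounded_measurable_phi: "bounded_measurable M phi"
  unfolding phi_eq_indicator_Cw_Nil by (rule bounded_measurable_indicator_Cw)

lemma bounded_measurable_haar: "bounded_measurable M (haar p i)"
  by (cases i) (simp_all add: haar_def bounded_measurable_phi bounded_measurable_hw)

lemma ip_Km:
  assumes "bounded_measurable M f"
  shows "ip M f (Km M m g) = (\<Sum>u\<in>words_upto m. ip M (indicator (Cw u)) g * ip M f (indicator (Cw u)))"
  unfolding Km_def
  by (rule ip_sum_right[OF finite_measure_axioms assms finite_words_upto])
    (simp add: bounded_measurable_indicator_Cw)

lemma Km_self_adjoint:
  assumes "bounded_measurable M f" "bounded_measurable M g"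
  shows "ip M f (Km M m g) = cnj (ip M g (Km M m f))"
  using assms by (simp add: ip_Km cnj_ip mult.commute)

definition haar_coeff :: "nat list \<Rightarrow> nat list \<Rightarrow> real" where
  "haar_coeff w x = (if prefix (w @ [0]) x then (1 - p) * mu x
                     else if prefix (w @ [2]) x then - p * mu x else 0)"

lemma ip_indicator_hw:
  assumes w: "set w \<subseteq> {0, 2}" and x: "set x \<subseteq> {0, 2}"
  shows "ip M (indicator (Cw x)) (hw p w) = complex_of_real (haar_coeff w x)"
proof -
  have digits: "set (w @ [0]) \<subseteq> {0, 2}" "set (w @ [2]) \<subseteq> {0, 2}"
    using w by auto
  have ip_eq: "ip M (indicator (Cw x)) (hw p w) = complex_of_real
      ((1 - p) * measure M (Cw x \<inter> Cw (w @ [0])) - p * measure M (Cw x \<inter> Cw (w @ [2])))"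
    unfolding hw_eq_lincomb
    by (subst ip_lincomb_right)
      (simp_all add: ip_indicator_indicator bounded_measurable_indicator_Cw sets_M Cw_sets_borel)
  consider "prefix (w @ [0]) x" | "prefix (w @ [2]) x" | "\<not> prefix (w @ [0]) x" "\<not> prefix (w @ [2]) x"
    by blast
  then show ?thesis
  proof cases
    case 1
    then show ?thesis
      using snoc_prefix_exclusive[OF 1, of 2]
      by (simp add: ip_eq measure_Cw_Int[OF x digits(1)] measure_Cw_Int[OF x digits(2)] haar_coeff_def)
  next
    case 2
    then show ?thesis
      using snoc_prefix_exclusive[OF 2, of 0]
      by (simp add: ip_eq measure_Cw_Int[OF x digits(1)] measure_Cw_Int[OF x digits(2)] haar_coeff_def)
  next
    case 3
    \<comment> \<open>if x is a prefix of w, the two siblings contribute (1-p) p mu w - p (1-p) mu w = 0\<close>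
    then have "prefix x (w @ [0]) \<longleftrightarrow> prefix x w" "prefix x (w @ [2]) \<longleftrightarrow> prefix x w"
      by auto
    with 3 show ?thesis
      by (simp add: ip_eq measure_Cw_Int[OF x digits(1)] measure_Cw_Int[OF x digits(2)]
          haar_coeff_def mu_snoc_0[OF w] mu_snoc_2[OF w])
  qed
qed

lemma ip_hw_indicator:
  "set w \<subseteq> {0, 2} \<Longrightarrow> set x \<subseteq> {0, 2} \<Longrightarrow> ip M (hw p w) (indicator (Cw x)) = complex_of_real (haar_coeff w x)"
  using ip_indicator_hw[of w x] cnj_ip[of M "indicator (Cw x)" "hw p w"] by simp

lemma ip_indicator_phi: "set x \<subseteq> {0, 2} \<Longrightarrow> ip M (indicator (Cw x)) phi = complex_of_real (mu x)"
  unfolding phi_eq_indicator_Cw_Nil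
  by (simp add: ip_indicator_indicator sets_M Cw_sets_borel measure_Cw_Int)

lemma prefix_if_haar_coeff_nonzero: "haar_coeff v x \<noteq> 0 \<Longrightarrow> prefix v x"
  by (auto simp: haar_coeff_def split: if_splits intro: prefix_order.trans[OF prefixI])

lemma haar_coeff_extension:
  assumes "prefix (u @ [a]) v" "a \<in> {0, 2}"
  shows "haar_coeff v x * haar_coeff u x = (if a = 0 then 1 - p else - p) * (mu x * haar_coeff v x)"
proof (cases "haar_coeff v x = 0")
  case False
  then have "prefix (u @ [a]) x"
    using assms(1) prefix_if_haar_coeff_nonzero prefix_order.trans by blast
  then show ?thesis
    using assms(2) snoc_prefix_exclusive(1)[of u a x] by (auto simp: haar_coeff_def[of u])
qed simp

lemma ip_hw_Km_phi_eq_sum: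
  assumes "set w \<subseteq> {0, 2}"
  shows "ip M (hw p w) (Km M m phi) = complex_of_real (\<Sum>x\<in>words_upto m. mu x * haar_coeff w x)"
  using assms
  by (simp add: ip_Km bounded_measurable_hw ip_indicator_phi ip_hw_indicator words_upto_digits
      cong: sum.cong)

lemma ip_hw_Km_hw_eq_sum:
  assumes "set u \<subseteq> {0, 2}" "set v \<subseteq> {0, 2}"
  shows "ip M (hw p u) (Km M m (hw p v)) = complex_of_real (\<Sum>x\<in>words_upto m. haar_coeff v x * haar_coeff u x)"
  using assms
  by (simp add: ip_Km bounded_measurable_hw ip_indicator_hw ip_hw_indicator words_upto_digits
      cong: sum.cong)

definition collision_prob :: real where
  "collision_prob = p\<^sup>2 + (1 - p)\<^sup>2"

lemma collision_prob_pos: "collision_prob > 0"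
  using p_pos by (simp add: collision_prob_def add_pos_nonneg)

lemma sum_words_mu_sq: "(\<Sum>y\<in>words j. (mu y)\<^sup>2) = collision_prob ^ j"
proof (induction j)
  case 0
  show ?case
    by (simp add: words_0 mu_Nil)
next
  case (Suc j)
  have first_digit: "(\<Sum>y\<in>(#) a ` words j. (mu y)\<^sup>2) = (digit_weight a)\<^sup>2 * collision_prob ^ j"
    if "a \<in> {0, 2}" for a
  proof -
    have "(\<Sum>y\<in>(#) a ` words j. (mu y)\<^sup>2) = (\<Sum>w\<in>words j. (digit_weight a)\<^sup>2 * (mu w)\<^sup>2)"
      using that by (simp add: sum.reindex measure_Cw_Cons words_def power_mult_distrib)
    then show ?thesis
      by (simp add: Suc.IH flip: sum_distrib_left)
  qed
  have "(\<Sum>y\<in>words (Suc j). (mu y)\<^sup>2) = (\<Sum>y\<in>(#) 0 ` words j. (mu y)\<^sup>2) + (\<Sum>y\<in>(#) 2 ` words j. (mu y)\<^sup>2)"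
    unfolding words_Suc by (rule sum.union_disjoint) (auto simp: finite_words)
  also have "\<dots> = collision_prob ^ Suc j"
    by (simp add: first_digit digit_weight_def collision_prob_def algebra_simps)
  finally show ?case .
qed

lemma sum_words_upto_mu_sq: "(\<Sum>y\<in>words_upto k. (mu y)\<^sup>2) = (\<Sum>j = 0..k. collision_prob ^ j)"
proof (induction k)
  case 0
  show ?case
    by (simp add: words_upto_0 mu_Nil)
next
  case (Suc k)
  have "(\<Sum>y\<in>words_upto (Suc k). (mu y)\<^sup>2) = (\<Sum>y\<in>words_upto k. (mu y)\<^sup>2) + (\<Sum>y\<in>words (Suc k). (mu y)\<^sup>2)"
    unfolding words_upto_Suc
    by (rule sum.union_disjoint) (auto simp: finite_words_upto finite_words words_upto_disjoint_words_Suc)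
  then show ?case
    using Suc.IH sum_words_mu_sq by simp
qed

lemma sum_extensions_mu_sq:
  assumes z: "set z \<subseteq> {0, 2}" "length z \<le> m"
  shows "(\<Sum>x\<in>words_upto m. if prefix z x then (mu x)\<^sup>2 else 0)
    = (mu z)\<^sup>2 * (\<Sum>j = 0..m - length z. collision_prob ^ j)"
proof -
  have "(\<Sum>x\<in>words_upto m. if prefix z x then (mu x)\<^sup>2 else 0) = (\<Sum>y\<in>words_upto (m - length z). (mu (z @ y))\<^sup>2)"
    by (rule sum_words_upto_extensions[OF z])
  also have "\<dots> = (\<Sum>y\<in>words_upto (m - length z). (mu z)\<^sup>2 * (mu y)\<^sup>2)"
    using z by (intro sum.cong) (auto simp: mu_append power_mult_distrib words_upto_digits)
  also have "\<dots> = (mu z)\<^sup>2 * (\<Sum>j = 0..m - length z. collision_prob ^ j)"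
    by (simp add: sum_words_upto_mu_sq flip: sum_distrib_left)
  finally show ?thesis .
qed

lemma sum_children_mu_sq:
  assumes w: "set w \<subseteq> {0, 2}" "length w < m"
  shows "(\<Sum>x\<in>words_upto m. \<alpha> * (if prefix (w @ [0]) x then (mu x)\<^sup>2 else 0)
      + \<beta> * (if prefix (w @ [2]) x then (mu x)\<^sup>2 else 0))
    = (\<alpha> * p\<^sup>2 + \<beta> * (1 - p)\<^sup>2) * (mu w)\<^sup>2 * (\<Sum>j = 0..m - length w - 1. collision_prob ^ j)"
proof -
  let ?Q = "\<Sum>j = 0..m - length w - 1. collision_prob ^ j"
  have "(\<Sum>x\<in>words_upto m. \<alpha> * (if prefix (w @ [0]) x then (mu x)\<^sup>2 else 0)
      + \<beta> * (if prefix (w @ [2]) x then (mu x)\<^sup>2 else 0))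
    = \<alpha> * (\<Sum>x\<in>words_upto m. if prefix (w @ [0]) x then (mu x)\<^sup>2 else 0)
      + \<beta> * (\<Sum>x\<in>words_upto m. if prefix (w @ [2]) x then (mu x)\<^sup>2 else 0)"
    by (simp only: sum.distrib sum_distrib_left)
  also have "\<dots> = \<alpha> * ((p * mu w)\<^sup>2 * ?Q) + \<beta> * (((1 - p) * mu w)\<^sup>2 * ?Q)"
    using w sum_extensions_mu_sq[of "w @ [0]" m] sum_extensions_mu_sq[of "w @ [2]" m]
    by (simp add: mu_snoc_0 mu_snoc_2)
  also have "\<dots> = (\<alpha> * p\<^sup>2 + \<beta> * (1 - p)\<^sup>2) * (mu w)\<^sup>2 * ?Q"
    unfolding power_mult_distrib by (simp add: algebra_simps)
  finally show ?thesis .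
qed

lemma sum_mu_haar_coeff:
  assumes "set w \<subseteq> {0, 2}" "length w < m"
  shows "(\<Sum>x\<in>words_upto m. mu x * haar_coeff w x)
    = p * (1 - p) * (2 * p - 1) * (mu w)\<^sup>2 * (\<Sum>j = 0..m - length w - 1. collision_prob ^ j)"
proof -
  have "mu x * haar_coeff w x = (1 - p) * (if prefix (w @ [0]) x then (mu x)\<^sup>2 else 0)
      + - p * (if prefix (w @ [2]) x then (mu x)\<^sup>2 else 0)" for x
    using snoc_prefix_exclusive(1)[of w 0 x 2] by (auto simp: haar_coeff_def power2_eq_square)
  then have "(\<Sum>x\<in>words_upto m. mu x * haar_coeff w x)
      = ((1 - p) * p\<^sup>2 + - p * (1 - p)\<^sup>2) * (mu w)\<^sup>2 * (\<Sum>j = 0..m - length w - 1. collision_prob ^ j)"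
    by (simp only: sum_children_mu_sq[OF assms])
  then show ?thesis
    by (simp add: power2_eq_square algebra_simps)
qed

lemma sum_haar_coeff_sq:
  assumes "set w \<subseteq> {0, 2}" "length w < m"
  shows "(\<Sum>x\<in>words_upto m. haar_coeff w x * haar_coeff w x)
    = 2 * p\<^sup>2 * (1 - p)\<^sup>2 * (mu w)\<^sup>2 * (\<Sum>j = 0..m - length w - 1. collision_prob ^ j)"
proof -
  have "haar_coeff w x * haar_coeff w x = (1 - p)\<^sup>2 * (if prefix (w @ [0]) x then (mu x)\<^sup>2 else 0)
      + p\<^sup>2 * (if prefix (w @ [2]) x then (mu x)\<^sup>2 else 0)" for x
    using snoc_prefix_exclusive(1)[of w 0 x 2] by (auto simp: haar_coeff_def power2_eq_square)
  then have "(\<Sum>x\<in>words_upto m. haar_coeff w x * haar_coeff w x)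
      = ((1 - p)\<^sup>2 * p\<^sup>2 + p\<^sup>2 * (1 - p)\<^sup>2) * (mu w)\<^sup>2 * (\<Sum>j = 0..m - length w - 1. collision_prob ^ j)"
    by (simp only: sum_children_mu_sq[OF assms])
  then show ?thesis
    by simp
qed

lemma haar_index_Some_iff: "m \<ge> 1 \<Longrightarrow> Some w \<in> haar_index m \<longleftrightarrow> set w \<subseteq> {0, 2} \<and> length w < m"
  by (auto simp: haar_index_def words_upto_def)

lemma ip_hw_Km_phi:
  assumes "set w \<subseteq> {0, 2}" "length w < m"
  shows "ip M (hw p w) (Km M m phi) = complex_of_real (p * (1 - p) * (2 * p - 1) * (mu w)\<^sup>2
    * (\<Sum>j = 0..m - length w - 1. collision_prob ^ j))"
  using assms by (simp add: ip_hw_Km_phi_eq_sum sum_mu_haar_coeff)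

lemma ip_hw_Km_hw_self:
  assumes "set w \<subseteq> {0, 2}" "length w < m"
  shows "ip M (hw p w) (Km M m (hw p w)) = complex_of_real (2 * p\<^sup>2 * (1 - p)\<^sup>2 * (mu w)\<^sup>2
    * (\<Sum>j = 0..m - length w - 1. collision_prob ^ j))"
  using assms by (simp add: ip_hw_Km_hw_eq_sum sum_haar_coeff_sq)

lemma ip_hw_Km_hw_parallel:
  assumes "set u \<subseteq> {0, 2}" "set v \<subseteq> {0, 2}" "u \<parallel> v"
  shows "ip M (hw p u) (Km M m (hw p v)) = 0"
proof -
  have "haar_coeff v x * haar_coeff u x = 0" for x
  proof (rule ccontr)
    assume "haar_coeff v x * haar_coeff u x \<noteq> 0"
    then have "prefix v x" "prefix u x"
      using prefix_if_haar_coeff_nonzero by auto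
    then show False
      using assms(3) prefix_same_cases by (auto simp: parallel_def)
  qed
  then have "(\<Sum>x\<in>words_upto m. haar_coeff v x * haar_coeff u x) = 0"
    by (simp add: sum.neutral)
  then show ?thesis
    unfolding ip_hw_Km_hw_eq_sum[OF assms(1,2)] by simp
qed

lemma ip_hw_Km_hw_extension:
  assumes uv: "prefix (u @ [a]) v" "a \<in> {0, 2}" and v: "set v \<subseteq> {0, 2}" "length v < m"
  shows "ip M (hw p u) (Km M m (hw p v)) = complex_of_real ((if a = 0 then 1 - p else - p)
    * (p * (1 - p) * (2 * p - 1) * (mu v)\<^sup>2 * (\<Sum>j = 0..m - length v - 1. collision_prob ^ j)))"
proof -
  have u: "set u \<subseteq> {0, 2}"
    using uv(1) v(1) by (auto simp: prefix_def)
  have "(\<Sum>x\<in>words_upto m. haar_coeff v x * haar_coeff u x)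
      = (if a = 0 then 1 - p else - p) * (\<Sum>x\<in>words_upto m. mu x * haar_coeff v x)"
    by (simp only: haar_coeff_extension[OF uv] sum_distrib_left)
  then show ?thesis
    by (simp add: ip_hw_Km_hw_eq_sum[OF u v(1)] sum_mu_haar_coeff[OF v])
qed

lemma ip_hw_Km_hw_child_0:
  assumes "prefix (u @ [0]) v" "set v \<subseteq> {0, 2}" "length v < m"
  shows "ip M (hw p u) (Km M m (hw p v)) = complex_of_real (p * (1 - p)\<^sup>2 * (2 * p - 1) * (mu v)\<^sup>2
    * (\<Sum>j = 0..m - length v - 1. collision_prob ^ j))"
  using ip_hw_Km_hw_extension[OF assms(1) _ assms(2,3)] by (simp add: power2_eq_square algebra_simps)

lemma ip_hw_Km_hw_child_2:
  assumes "prefix (u @ [2]) v" "set v \<subseteq> {0, 2}" "length v < m"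
  shows "ip M (hw p u) (Km M m (hw p v)) = complex_of_real (- (p\<^sup>2 * (1 - p) * (2 * p - 1) * (mu v)\<^sup>2
    * (\<Sum>j = 0..m - length v - 1. collision_prob ^ j)))"
  using ip_hw_Km_hw_extension[OF assms(1) _ assms(2,3)] by (simp add: power2_eq_square algebra_simps)

lemma ip_haar_Km_haar_eq_0_if_half:
  assumes half: "p = 1 / 2" and m: "m \<ge> 1"
    and ij: "i \<in> haar_index m" "j \<in> haar_index m" "i \<noteq> j"
  shows "ip M (haar p i) (Km M m (haar p j)) = 0"
proof -
  have hw_phi: "ip M (hw p w) (Km M m phi) = 0" if "Some w \<in> haar_index m" for w
    using that by (simp add: ip_hw_Km_phi haar_index_Some_iff[OF m], simp add: half)
  have phi_hw: "ip M phi (Km M m (hw p w)) = 0" if "Some w \<in> haar_index m" for w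
    using hw_phi[OF that] Km_self_adjoint[OF bounded_measurable_phi bounded_measurable_hw[of w], of m] by simp
  have hw_hw: "ip M (hw p u) (Km M m (hw p v)) = 0" if v_index: "Some v \<in> haar_index m" and uv: "strict_prefix u v" for u v
  proof -
    have v: "set v \<subseteq> {0, 2}" "length v < m"
      using v_index by (simp_all add: haar_index_Some_iff[OF m])
    obtain a where "a \<in> {0, 2}" "prefix (u @ [a]) v"
      using strict_prefix_imp_snoc_prefix[OF uv v(1)] .
    then show ?thesis
      using ip_hw_Km_hw_extension[OF _ _ v] by (simp, simp add: half)
  qed
  have hw_hw': "ip M (hw p u) (Km M m (hw p v)) = 0" if "Some u \<in> haar_index m" "strict_prefix v u" for u v
    using hw_hw[OF that] Km_self_adjoint[OF bounded_measurable_hw[of u] bounded_measurable_hw[of v], of m] by simp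
  show ?thesis
  proof (cases i; cases j)
    fix u v assume "i = Some u" "j = Some v"
    then have "u \<noteq> v"
      using ij(3) by simp
    then consider "strict_prefix u v" | "strict_prefix v u" | "u \<parallel> v"
      using prefix_cases by (metis strict_prefix_def)
    then show ?thesis
      using ij \<open>i = Some u\<close> \<open>j = Some v\<close> hw_hw hw_hw' haar_index_digits ip_hw_Km_hw_parallel
      by cases (simp_all add: haar_def)
  qed (use ij hw_phi phi_hw in \<open>simp_all add: haar_def\<close>)
qed

end

section \<open>The weighted Haar basis\<close>

context cantor_measure
begin

lemma ip_hw_hw:
  assumes u: "set u \<subseteq> {0, 2}" and v: "set v \<subseteq> {0, 2}"
  shows "ip M (hw p u) (hw p v) = complex_of_real (if u = v then p * (1 - p) * mu u else 0)"
proof -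
  have digits: "set (v @ [0]) \<subseteq> {0, 2}" "set (v @ [2]) \<subseteq> {0, 2}"
    using v by auto
  have ip_eq: "ip M (hw p u) (hw p v) = complex_of_real ((1 - p) * haar_coeff u (v @ [0]) - p * haar_coeff u (v @ [2]))"
    by (subst (2) hw_eq_lincomb, subst ip_lincomb_right)
      (simp_all add: bounded_measurable_hw bounded_measurable_indicator_Cw
        ip_hw_indicator[OF u digits(1)] ip_hw_indicator[OF u digits(2)])
  show ?thesis
  proof (cases "u = v")
    case True
    then have "(1 - p) * haar_coeff u (v @ [0]) - p * haar_coeff u (v @ [2]) = p * (1 - p) * mu u"
      by (simp add: haar_coeff_def mu_snoc_0[OF v] mu_snoc_2[OF v] algebra_simps)
    then show ?thesis
      unfolding ip_eq using True by simp
  next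
    case False
    \<comment> \<open>both children of v get the same sign from h_u, so (1-p) p mu v and -p (1-p) mu v cancel\<close>
    then have "prefix (u @ [c]) (v @ [a]) \<longleftrightarrow> prefix (u @ [c]) v" for c a
      by auto
    with False show ?thesis
      by (simp add: ip_eq haar_coeff_def mu_snoc_0[OF v] mu_snoc_2[OF v] algebra_simps)
  qed
qed

lemma ip_hw_self: "set w \<subseteq> {0, 2} \<Longrightarrow> ip M (hw p w) (hw p w) = complex_of_real (p * (1 - p) * mu w)"
  by (simp add: ip_hw_hw)

lemma ip_phi_phi: "ip M phi phi = 1"
  using ip_indicator_phi[of "[]"] by (simp add: mu_Nil flip: phi_eq_indicator_Cw_Nil)

lemma ip_phi_hw: "set w \<subseteq> {0, 2} \<Longrightarrow> ip M phi (hw p w) = 0"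
  using ip_indicator_hw[of w "[]"] by (simp add: haar_coeff_def flip: phi_eq_indicator_Cw_Nil)

lemma ip_hw_phi: "set w \<subseteq> {0, 2} \<Longrightarrow> ip M (hw p w) phi = 0"
  using ip_phi_hw[of w] cnj_ip[of M phi "hw p w"] by simp

lemma indicator_Cw_in_haar_span:
  assumes "m \<ge> 1"
  shows "u \<in> words_upto m \<Longrightarrow> indicator (Cw u) \<in> fin_span (haar_index m) (haar p)"
proof (induction u rule: rev_induct)
  case Nil
  have "haar p None \<in> fin_span (haar_index m) (haar p)"
    by (rule fin_span_mem[OF finite_haar_index]) (simp add: haar_index_def)
  moreover have "haar p None = indicator (Cw [])"
    by (simp add: haar_def phi_eq_indicator_Cw_Nil)
  ultimately show ?case
    by simp
next
  case (snoc a u)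
  then have "u \<in> words_upto m" and u: "u \<in> words_upto (m - 1)" and a: "a \<in> {0, 2}"
    by (auto simp: words_upto_def)
  then have iu: "indicator (Cw u) \<in> fin_span (haar_index m) (haar p)"
    using snoc.IH by blast
  have "haar p (Some u) \<in> fin_span (haar_index m) (haar p)"
    using u by (intro fin_span_mem finite_haar_index) (simp add: haar_index_def)
  moreover have "haar p (Some u) = hw p u"
    by (simp add: haar_def)
  ultimately have hu: "hw p u \<in> fin_span (haar_index m) (haar p)"
    by simp
  have "indicator (Cw (u @ [a])) = (\<lambda>x. complex_of_real (digit_weight a) * indicator (Cw u) x
      + (if a = 0 then 1 else -1) * hw p u x)"
    using a by (auto simp: fun_eq_iff hw_def digit_weight_def indicator_Cw_snoc_split[of u] algebra_simps)
  then show ?case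
    using fin_span_lincomb[OF iu hu] by simp
qed

lemma Fm_subset_haar_span: "m \<ge> 1 \<Longrightarrow> Fm m \<subseteq> fin_span (haar_index m) (haar p)"
  unfolding Fm_eq_fin_span
  by (rule fin_span_subset) (auto simp: finite_words_upto indicator_Cw_in_haar_span)

lemma haar_in_Fm:
  assumes "m \<ge> 1" "i \<in> haar_index m"
  shows "haar p i \<in> Fm m"
proof (cases i)
  case None
  then show ?thesis
    using indicator_Cw_in_Fm[of "[]" m] by (simp add: haar_def phi_eq_indicator_Cw_Nil words_upto_def)
next
  case (Some w)
  then have "w @ [a] \<in> words_upto m" if "a \<in> {0, 2}" for a
    using assms that by (auto simp: haar_index_def words_upto_def)
  then have "hw p w \<in> Fm m"
    unfolding hw_eq_lincomb Fm_eq_fin_span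
    by (intro fin_span_lincomb) (simp_all add: indicator_Cw_in_Fm flip: Fm_eq_fin_span)
  then show ?thesis
    using Some by (simp add: haar_def)
qed

definition haar_norm :: "nat list option \<Rightarrow> real" where
  "haar_norm i = (case i of None \<Rightarrow> 1 | Some w \<Rightarrow> sqrt (p * (1 - p) * mu w))"

lemma haar_norm_pos: "i \<in> haar_index m \<Longrightarrow> haar_norm i > 0"
  using p_pos p_less_1 mu_pos haar_index_digits by (cases i) (auto simp: haar_norm_def)

lemma ip_haar_haar:
  assumes "i \<in> haar_index m" "j \<in> haar_index m"
  shows "ip M (haar p i) (haar p j) = (if i = j then complex_of_real ((haar_norm i)\<^sup>2) else 0)"
  using assms p_pos p_less_1 mu_pos haar_index_digits
  by (cases i; cases j)
    (auto simp: haar_def haar_norm_def ip_phi_phi ip_phi_hw ip_hw_phi ip_hw_hw less_imp_le)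

lemma haar_orthogonal_basis:
  assumes "m \<ge> 1"
  shows "orthogonal_basis_of M (haar_index m) (haar p) (Fm m)"
  unfolding orthogonal_basis_of_def
proof (intro conjI ballI impI finite_haar_index)
  fix i assume i: "i \<in> haar_index m"
  show "haar p i \<in> Fm m"
    by (rule haar_in_Fm[OF assms i])
  show "ip M (haar p i) (haar p i) \<noteq> 0"
    using ip_haar_haar[OF i i] haar_norm_pos[OF i] by simp
next
  fix i j assume "i \<in> haar_index m" "j \<in> haar_index m" "i \<noteq> j"
  then show "ip M (haar p i) (haar p j) = 0"
    by (simp add: ip_haar_haar)
next
  fix f assume "f \<in> Fm m"
  then show "\<exists>c. f = (\<lambda>x. \<Sum>i\<in>haar_index m. c i * haar p i x)"
    using Fm_subset_haar_span[OF assms] by (auto simp: fin_span_def)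
qed

lemma ebasis_eq: "ebasis M p i = (\<lambda>x. haar p i x / complex_of_real (haar_norm i))"
  by (cases i) (simp_all add: ebasis_def haar_def haar_norm_def)

lemma bounded_measurable_ebasis: "bounded_measurable M (ebasis M p i)"
  unfolding ebasis_eq by (rule bounded_measurable_divide[OF bounded_measurable_haar])

lemma ebasis_orthonormal:
  assumes "i \<in> haar_index m" "j \<in> haar_index m"
  shows "ip M (ebasis M p i) (ebasis M p j) = (if i = j then 1 else 0)"
  using haar_norm_pos[OF assms(1)] haar_norm_pos[OF assms(2)]
  by (simp add: ebasis_eq ip_divide_left ip_divide_right ip_haar_haar[OF assms] power2_eq_square)

lemma Fm_subset_ebasis_span:
  assumes "m \<ge> 1"
  shows "Fm m \<subseteq> fin_span (haar_index m) (ebasis M p)"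
proof -
  have "haar p i \<in> fin_span (haar_index m) (ebasis M p)" if i: "i \<in> haar_index m" for i
  proof -
    have e: "ebasis M p i \<in> fin_span (haar_index m) (ebasis M p)"
      by (rule fin_span_mem[OF finite_haar_index i])
    have "haar p i = (\<lambda>x. complex_of_real (haar_norm i) * ebasis M p i x)"
      using haar_norm_pos[OF i] by (simp add: ebasis_eq fun_eq_iff)
    then show ?thesis
      using fin_span_lincomb[OF e e, of "complex_of_real (haar_norm i)" 0] by simp
  qed
  then have "fin_span (haar_index m) (haar p) \<subseteq> fin_span (haar_index m) (ebasis M p)"
    by (intro fin_span_subset finite_haar_index) blast
  then show ?thesis
    using Fm_subset_haar_span[OF assms] by blast
qed

lemma ebasis_spans_Fm:
  assumes "m \<ge> 1" "f \<in> Fm m"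
  shows "\<exists>c. f = (\<lambda>x. \<Sum>i\<in>haar_index m. c i * ebasis M p i x)"
  using Fm_subset_ebasis_span assms by (auto simp: fin_span_def)

lemma ip_ebasis_Km_ebasis:
  "ip M (ebasis M p i) (Km M m (ebasis M p j))
    = ip M (haar p i) (Km M m (haar p j)) / complex_of_real (haar_norm j) / complex_of_real (haar_norm i)"
  by (simp add: ebasis_eq Km_divide ip_divide_left ip_divide_right)

lemma ip_ebasis_Km_ebasis_parallel:
  assumes "set u \<subseteq> {0, 2}" "set v \<subseteq> {0, 2}" "u \<parallel> v"
  shows "ip M (ebasis M p (Some v)) (Km M m (ebasis M p (Some u))) = 0"
proof -
  have "ip M (hw p v) (Km M m (hw p u)) = 0"
    using assms by (intro ip_hw_Km_hw_parallel) (auto simp: parallel_def)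
  then show ?thesis
    by (simp add: ip_ebasis_Km_ebasis haar_def)
qed

lemma ebasis_Km_diagonal_iff:
  assumes m: "m \<ge> 1"
  shows "(\<forall>i\<in>haar_index m. \<forall>j\<in>haar_index m.
      i \<noteq> j \<longrightarrow> ip M (ebasis M p i) (Km M m (ebasis M p j)) = 0) \<longleftrightarrow> p = 1 / 2"
proof
  assume diagonal: "\<forall>i\<in>haar_index m. \<forall>j\<in>haar_index m.
      i \<noteq> j \<longrightarrow> ip M (ebasis M p i) (Km M m (ebasis M p j)) = 0"
  have index: "Some [] \<in> haar_index m" "None \<in> haar_index m"
    using m by (simp_all add: haar_index_Some_iff) (simp add: haar_index_def)
  then have "ip M (ebasis M p (Some [])) (Km M m (ebasis M p None)) = 0"
    using diagonal by blast
  then have "ip M (hw p []) (Km M m phi) = 0"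
    using haar_norm_pos[OF index(1)] haar_norm_pos[OF index(2)] by (simp add: ip_ebasis_Km_ebasis haar_def)
  moreover have "ip M (hw p []) (Km M m phi)
      = complex_of_real (p * (1 - p) * (2 * p - 1) * (\<Sum>j = 0..m - 1. collision_prob ^ j))"
    using m ip_hw_Km_phi[of "[]" m] by (simp add: mu_Nil)
  moreover have "(\<Sum>j = 0..m - 1. collision_prob ^ j) > 0"
    using collision_prob_pos by (intro sum_pos) auto
  ultimately have "p * (1 - p) * (2 * p - 1) = 0"
    by (simp only: of_real_eq_0_iff) simp
  then show "p = 1 / 2"
    using p_pos p_less_1 by simp
next
  assume "p = 1 / 2"
  then show "\<forall>i\<in>haar_index m. \<forall>j\<in>haar_index m.
      i \<noteq> j \<longrightarrow> ip M (ebasis M p i) (Km M m (ebasis M p j)) = 0"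
    using m by (simp add: ip_ebasis_Km_ebasis ip_haar_Km_haar_eq_0_if_half)
qed

end

theorem theorem4p1:
  fixes p :: real and m :: nat and M :: "real measure"
  assumes p: "0 < p" "p < 1"
    and m: "m \<ge> 1"
    and M_prob: "prob_space M"
    and M_borel: "sets M = sets borel"
    and M_unit: "emeasure M {0..1} = 1"
    and M_selfsim: "\<forall>A\<in>sets borel.
        emeasure M A = ennreal p * emeasure M (S 0 -` A) + ennreal (1 - p) * emeasure M (S 2 -` A)"
  defines "q \<equiv> p\<^sup>2 + (1 - p)\<^sup>2"
  shows
    \<comment> \<open>(1)\<close>
    "orthogonal_basis_of M (haar_index m) (haar p) (Fm m)
     \<and> (\<forall>w\<in>words_upto (m - 1).
          ip M (hw p w) (hw p w) = complex_of_real (p * (1 - p) * measure M (Cw w)))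
    \<comment> \<open>(2)\<close>
     \<and> (\<forall>f\<in>Fm m. Km M m f \<in> Fm m)
     \<and> (\<forall>f\<in>L2 M. (\<forall>g\<in>Fm m. ip M g f = 0) \<longrightarrow> Km M m f = (\<lambda>x. 0))
    \<comment> \<open>(3)\<close>
     \<and> (\<forall>w\<in>words_upto (m - 1).
          ip M (hw p w) (Km M m phi) =
            complex_of_real (p * (1 - p) * (2 * p - 1) * (measure M (Cw w))\<^sup>2
              * (\<Sum>j = 0..m - length w - 1. q ^ j)))
    \<comment> \<open>(4)\<close>
     \<and> (\<forall>w\<in>words_upto (m - 1).
          ip M (hw p w) (Km M m (hw p w)) =
            complex_of_real (2 * p\<^sup>2 * (1 - p)\<^sup>2 * (measure M (Cw w))\<^sup>2
              * (\<Sum>j = 0..m - length w - 1. q ^ j)))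
    \<comment> \<open>(5)\<close>
     \<and> (\<forall>u\<in>words_upto (m - 1). \<forall>v\<in>words_upto (m - 1).
          u \<noteq> v \<and> \<not> prefix u v \<and> \<not> prefix v u \<longrightarrow> ip M (hw p u) (Km M m (hw p v)) = 0)
     \<and> (\<forall>u\<in>words_upto (m - 1). \<forall>v\<in>words_upto (m - 1).
          strict_prefix u v \<and> prefix (u @ [0]) v \<longrightarrow>
            ip M (hw p u) (Km M m (hw p v)) =
              complex_of_real (p * (1 - p)\<^sup>2 * (2 * p - 1) * (measure M (Cw v))\<^sup>2
                * (\<Sum>j = 0..m - length v - 1. q ^ j)))
     \<and> (\<forall>u\<in>words_upto (m - 1). \<forall>v\<in>words_upto (m - 1).
          strict_prefix u v \<and> prefix (u @ [2]) v \<longrightarrow>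
            ip M (hw p u) (Km M m (hw p v)) =
              complex_of_real (- (p\<^sup>2 * (1 - p) * (2 * p - 1) * (measure M (Cw v))\<^sup>2
                * (\<Sum>j = 0..m - length v - 1. q ^ j))))
    \<comment> \<open>Consequences: orthonormal basis, self-adjoint matrix, tree-banded, diagonal iff p = 1/2\<close>
     \<and> (\<forall>i\<in>haar_index m. \<forall>j\<in>haar_index m.
          ip M (ebasis M p i) (ebasis M p j) = (if i = j then 1 else 0))
     \<and> (\<forall>f\<in>Fm m. \<exists>c. f = (\<lambda>x. \<Sum>i\<in>haar_index m. c i * ebasis M p i x))
     \<and> (\<forall>i\<in>haar_index m. \<forall>j\<in>haar_index m.
          ip M (ebasis M p i) (Km M m (ebasis M p j)) = cnj (ip M (ebasis M p j) (Km M m (ebasis M p i))))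
     \<and> (\<forall>u\<in>words_upto (m - 1). \<forall>v\<in>words_upto (m - 1).
          \<not> prefix u v \<and> \<not> prefix v u \<longrightarrow> ip M (ebasis M p (Some v)) (Km M m (ebasis M p (Some u))) = 0)
     \<and> ((\<forall>i\<in>haar_index m. \<forall>j\<in>haar_index m.
          i \<noteq> j \<longrightarrow> ip M (ebasis M p i) (Km M m (ebasis M p j)) = 0) \<longleftrightarrow> p = 1 / 2)"
proof -
  interpret cantor_measure p M
    using p M_prob M_borel M_unit M_selfsim by (simp add: cantor_measure_def cantor_measure_axioms_def)
  have q_eq: "q = collision_prob"
    by (simp add: q_def collision_prob_def)
  have words: "set w \<subseteq> {0, 2}" "length w < m" if "w \<in> words_upto (m - 1)" for w
    using m that by (auto simp: words_upto_def)
  show ?thesis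
    unfolding q_eq
    by (intro conjI ballI impI haar_orthogonal_basis[OF m] Km_in_Fm Km_eq_0_if_orthogonal_Fm
        ebasis_Km_diagonal_iff[OF m] Km_self_adjoint bounded_measurable_ebasis ebasis_orthonormal
        ebasis_spans_Fm[OF m])
      (blast intro: ip_hw_self ip_hw_Km_phi ip_hw_Km_hw_self ip_hw_Km_hw_parallel ip_hw_Km_hw_child_0
        ip_hw_Km_hw_child_2 ip_ebasis_Km_ebasis_parallel dest: words)+
qed

end
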